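(* Let $G=(V,E)$ be a finite connected directed graph with $(i,j)\in E$ if and only if $(j,i)\in E$, and write $\partial i=\{j\in V:(j,i)\in E\}$. Let $q,q^*:V\to\mathbb{R}$ and let $\phi,\phi^*:E\to\mathbb{R}$ be skew-symmetric ($\phi_{ij}=-\phi_{ji}$, $\phi^*_{ij}=-\phi^*_{ji}$) with $\sum_{j\in\partial i}\phi_{ji}+q_i=0$ and $\sum_{j\in\partial i}\phi^*_{ji}+q^*_i=0$ for all $i\in V$. Let $T\subset V$ be non-empty. If $q_i\ge q_i^*$ for all $i\in V\setminus T$, then for every node $u\in V\setminus T$ there exists a non-intersecting directed path $(i_1,\ldots,i_n)$ in $G$ with $i_1\in T$, $i_n=u$ and $\phi^*_{i_li_{l+1}}\ge\phi_{i_li_{l+1}}$ for all $l=1,\ldots,n-1$. Moreover, if $q_u>q_u^*$, the path can be chosen so that $\phi^*_{i_li_{l+1}}>\phi_{i_li_{l+1}}$ for all $l=1,\ldots,n-1$.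
   Context: A non-intersecting directed path is a sequence of pairwise distinct nodes $(i_1,\ldots,i_n)$ with $(i_l,i_{l+1})\in E$ for each $l$. *)

theory Defs
  imports Complex_Main
begin

definition nonint_path :: "('a \<times> 'a) set \<Rightarrow> 'a list \<Rightarrow> bool" where
  "nonint_path E p \<longleftrightarrow> p \<noteq> [] \<and> distinct p \<and>
     (\<forall>l. Suc l < length p \<longrightarrow> (p ! l, p ! Suc l) \<in> E)"

definition in_nbrs :: "'a set \<Rightarrow> ('a \<times> 'a) set \<Rightarrow> 'a \<Rightarrow> 'a set" where
  "in_nbrs V E i = {j \<in> V. (j, i) \<in> E}"

definition sym_conn_graph :: "'a set \<Rightarrow> ('a \<times> 'a) set \<Rightarrow> bool" where
  "sym_conn_graph V E \<longleftrightarrow> finite V \<and> E \<subseteq> V \<times> V \<and>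
     (\<forall>i j. (i, j) \<in> E \<longleftrightarrow> (j, i) \<in> E) \<and>
     (\<forall>i\<in>V. \<forall>j\<in>V. (i, j) \<in> E\<^sup>*)"

end

theory Submission
  imports Defs "HOL-Library.Transitive_Closure_Table"
begin

text \<open>Put \<open>d = \<phi>\<^sup>* - \<phi>\<close>; it is skew-symmetric with net inflow \<open>q - q\<^sup>*\<close>, which is
  nonnegative off \<open>T\<close>. Let \<open>R\<close> be the set of nodes reachable from \<open>T\<close> along edges with
  \<open>d \<ge> 0\<close> (resp. \<open>d > 0\<close>) and suppose \<open>u \<notin> R\<close>. Summing the net inflow over
  \<open>U = V - R\<close>, the flow along edges inside \<open>U\<close> cancels, so the total equals the inflow
  across the boundary of \<open>U\<close>. Every boundary edge points from \<open>R\<close> into \<open>U\<close> and thus has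
  \<open>d < 0\<close> (resp. \<open>d \<le> 0\<close>); in the first case connectivity provides one, so the total is
  negative (resp. nonpositive), while it is nonnegative (resp. at least \<open>q u - q\<^sup>* u > 0\<close>).
  A walk witnessing \<open>u \<in> R\<close> becomes the required path once its cycles are cut out.\<close>

definition net_inflow :: "'a set \<Rightarrow> ('a \<times> 'a) set \<Rightarrow> ('a \<Rightarrow> 'a \<Rightarrow> real) \<Rightarrow> 'a \<Rightarrow> real" where
  "net_inflow V E d i = (\<Sum>j\<in>in_nbrs V E i. d j i)"

definition skew_on :: "('a \<times> 'a) set \<Rightarrow> ('a \<Rightarrow> 'a \<Rightarrow> real) \<Rightarrow> bool" where
  "skew_on E d \<longleftrightarrow> (\<forall>(i, j)\<in>E. d i j = - d j i)"

lemma skew_on_diff: "skew_on E f \<Longrightarrow> skew_on E g \<Longrightarrow> skew_on E (\<lambda>i j. f i j - g i j)"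
  unfolding skew_on_def by fastforce

lemma net_inflow_diff:
  "net_inflow V E (\<lambda>i j. f i j - g i j) i = net_inflow V E f i - net_inflow V E g i"
  by (simp add: net_inflow_def sum_subtractf)

lemma rtrancl_path_chain:
  "rtrancl_path r x xs y \<Longrightarrow>
     last (x # xs) = y \<and> (\<forall>l. Suc l < length (x # xs) \<longrightarrow> r ((x # xs) ! l) ((x # xs) ! Suc l))"
  by (induction rule: rtrancl_path.induct) (auto simp: nth_Cons split: nat.split)

lemma rtrancl_imp_nonint_path:
  assumes "(a, b) \<in> F\<^sup>*"
  obtains p where "nonint_path F p" "hd p = a" "last p = b"
proof -
  from assms obtain xs where "rtrancl_path (\<lambda>x y. (x, y) \<in> F) a xs b"
    using rtranclp_eq_rtrancl_path[of "\<lambda>x y. (x, y) \<in> F"] by (auto simp: rtranclp_rtrancl_eq)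
  then obtain ys where "rtrancl_path (\<lambda>x y. (x, y) \<in> F) a ys b" "distinct (a # ys)"
    by (rule rtrancl_path_distinct)
  with rtrancl_path_chain[OF this(1)] show thesis
    by (intro that[of "a # ys"]) (auto simp: nonint_path_def)
qed

lemma nonint_path_restrict_iff:
  "nonint_path {(i, j) \<in> E. P i j} p \<longleftrightarrow>
     nonint_path E p \<and> (\<forall>l. Suc l < length p \<longrightarrow> P (p ! l) (p ! Suc l))"
  by (auto simp: nonint_path_def)

lemma edge_into_unreached:
  assumes "j \<in> {(i, j) \<in> E. P i j}\<^sup>* `` T" "i \<notin> {(i, j) \<in> E. P i j}\<^sup>* `` T" "(j, i) \<in> E"
  shows "\<not> P j i"
  using assms by (blast intro: rtrancl_into_rtrancl)

lemma rtrancl_enters_set: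
  assumes "(a, u) \<in> E\<^sup>*" "a \<notin> U" "u \<in> U"
  obtains j i where "(j, i) \<in> E" "j \<notin> U" "i \<in> U"
  using assms by (induction rule: rtrancl_induct) auto

lemma sum_net_inflow_eq_boundary_inflow:
  assumes "finite V" "sym E" "skew_on E d" "U \<subseteq> V"
  shows "(\<Sum>i\<in>U. net_inflow V E d i) = (\<Sum>i\<in>U. \<Sum>j\<in>in_nbrs V E i - U. d j i)"
proof -
  have fin_U: "finite U" and fin_nbrs: "\<And>i. finite (in_nbrs V E i)"
    using assms(1,4) finite_subset by (auto simp: in_nbrs_def)
  define e where "e i j = (if (i, j) \<in> E then d i j else 0)" for i j
  have inner: "(\<Sum>j\<in>in_nbrs V E i \<inter> U. d j i) = (\<Sum>j\<in>U. e j i)" for i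
  proof -
    have "in_nbrs V E i \<inter> U = {j \<in> U. (j, i) \<in> E}"
      using assms(4) by (auto simp: in_nbrs_def)
    then show ?thesis
      using fin_U by (simp add: sum.inter_filter e_def)
  qed
  have anti: "e i j = - e j i" for i j
    using assms(2,3) by (auto simp: e_def skew_on_def dest: symD)
  have "(\<Sum>i\<in>U. \<Sum>j\<in>U. e j i) = (\<Sum>j\<in>U. \<Sum>i\<in>U. e j i)"
    by (rule sum.swap)
  also have "\<dots> = (\<Sum>j\<in>U. \<Sum>i\<in>U. - e i j)"
    by (intro sum.cong refl anti)
  also have "\<dots> = - (\<Sum>i\<in>U. \<Sum>j\<in>U. e j i)"
    by (simp add: sum_negf)
  finally have internal: "(\<Sum>i\<in>U. \<Sum>j\<in>in_nbrs V E i \<inter> U. d j i) = 0"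
    by (simp add: inner)
  have "net_inflow V E d i = (\<Sum>j\<in>in_nbrs V E i \<inter> U. d j i) + (\<Sum>j\<in>in_nbrs V E i - U. d j i)" for i
    using fin_nbrs by (simp add: net_inflow_def sum.Int_Diff)
  then show ?thesis
    by (simp add: sum.distrib internal)
qed

lemma reachable_by_nonneg_edges:
  assumes G: "sym_conn_graph V E" and d: "skew_on E d"
    and T: "T \<subseteq> V" "T \<noteq> {}"
    and inflow: "\<forall>i\<in>V - T. net_inflow V E d i \<ge> 0"
    and u: "u \<in> V"
  shows "u \<in> {(i, j) \<in> E. d i j \<ge> 0}\<^sup>* `` T"
proof (rule ccontr)
  let ?R = "{(i, j) \<in> E. d i j \<ge> 0}\<^sup>* `` T"
  define U where "U = V - ?R"
  assume "u \<notin> ?R"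
  with u have "u \<in> U" by (simp add: U_def)
  have fin: "finite V" and EV: "E \<subseteq> V \<times> V" and "sym E" and conn: "\<forall>i\<in>V. \<forall>j\<in>V. (i, j) \<in> E\<^sup>*"
    using G by (auto simp: sym_conn_graph_def sym_def)
  have U: "U \<subseteq> V" "U \<inter> T = {}"
    by (auto simp: U_def)
  have boundary: "d j i < 0" if "i \<in> U" "j \<in> in_nbrs V E i - U" for i j
    using that edge_into_unreached[of j E "\<lambda>i j. d i j \<ge> 0" T i] by (auto simp: U_def in_nbrs_def)
  obtain a where "a \<in> T" using T by blast
  with conn T \<open>u \<in> V\<close> have "(a, u) \<in> E\<^sup>*" by blast
  moreover have "a \<notin> U" using \<open>a \<in> T\<close> U(2) by blast
  ultimately obtain j i where "(j, i) \<in> E" "j \<notin> U" "i \<in> U"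
    using \<open>u \<in> U\<close> by (rule rtrancl_enters_set)
  with EV have ji: "i \<in> U" "j \<in> in_nbrs V E i - U"
    by (auto simp: in_nbrs_def)
  have fin_U: "finite U" and fin_nbrs: "\<And>i. finite (in_nbrs V E i)"
    using fin U finite_subset by (auto simp: in_nbrs_def)
  have inner_nonpos: "(\<Sum>j\<in>in_nbrs V E i - U. d j i) \<le> 0" if "i \<in> U" for i
    using boundary that by (intro sum_nonpos) (simp add: less_imp_le)
  have "(\<Sum>j\<in>in_nbrs V E i - U. d j i) < (\<Sum>j\<in>in_nbrs V E i - U. 0)"
    using boundary ji fin_nbrs by (intro sum_strict_mono_ex1) (auto intro: less_imp_le)
  with ji(1) have "\<exists>i\<in>U. (\<Sum>j\<in>in_nbrs V E i - U. d j i) < 0" by auto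
  then have "(\<Sum>i\<in>U. \<Sum>j\<in>in_nbrs V E i - U. d j i) < (\<Sum>i\<in>U. 0)"
    using inner_nonpos fin_U by (intro sum_strict_mono_ex1) auto
  moreover have "(\<Sum>i\<in>U. net_inflow V E d i) \<ge> 0"
    using inflow U by (auto intro: sum_nonneg)
  ultimately show False
    using sum_net_inflow_eq_boundary_inflow[OF fin \<open>sym E\<close> d U(1)] by simp
qed

lemma reachable_by_pos_edges:
  assumes "finite V" "sym E" and d: "skew_on E d"
    and inflow: "\<forall>i\<in>V - T. net_inflow V E d i \<ge> 0"
    and u: "u \<in> V - T" "net_inflow V E d u > 0"
  shows "u \<in> {(i, j) \<in> E. d i j > 0}\<^sup>* `` T"
proof (rule ccontr)
  let ?R = "{(i, j) \<in> E. d i j > 0}\<^sup>* `` T"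
  define U where "U = V - ?R"
  assume "u \<notin> ?R"
  with u have "u \<in> U" by (simp add: U_def)
  have U: "U \<subseteq> V" "U \<subseteq> V - T"
    by (auto simp: U_def)
  have "d j i \<le> 0" if "i \<in> U" "j \<in> in_nbrs V E i - U" for i j
    using that edge_into_unreached[of j E "\<lambda>i j. d i j > 0" T i] by (auto simp: U_def in_nbrs_def)
  then have "(\<Sum>i\<in>U. \<Sum>j\<in>in_nbrs V E i - U. d j i) \<le> 0"
    by (auto intro!: sum_nonpos)
  moreover have "(\<Sum>i\<in>U. 0) < (\<Sum>i\<in>U. net_inflow V E d i)"
    using \<open>finite V\<close> U inflow u \<open>u \<in> U\<close>
    by (intro sum_strict_mono_ex1) (auto dest: finite_subset)
  ultimately show False
    using sum_net_inflow_eq_boundary_inflow[OF \<open>finite V\<close> \<open>sym E\<close> d U(1)] by simp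
qed

lemma nonint_path_from_reachable:
  assumes "u \<in> {(i, j) \<in> E. P i j}\<^sup>* `` T"
  shows "\<exists>p. nonint_path E p \<and> hd p \<in> T \<and> last p = u \<and>
           (\<forall>l. Suc l < length p \<longrightarrow> P (p ! l) (p ! Suc l))"
proof -
  from assms obtain a where "a \<in> T" and "(a, u) \<in> {(i, j) \<in> E. P i j}\<^sup>*" by blast
  from this(2) obtain p where "nonint_path {(i, j) \<in> E. P i j} p" "hd p = a" "last p = u"
    by (rule rtrancl_imp_nonint_path)
  with \<open>a \<in> T\<close> show ?thesis
    unfolding nonint_path_restrict_iff by blast
qed

theorem theorem3:
  fixes V :: "'a set" and E :: "('a \<times> 'a) set"
    and q qs :: "'a \<Rightarrow> real" and \<phi> \<phi>s :: "'a \<Rightarrow> 'a \<Rightarrow> real"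
    and T :: "'a set"
  assumes G: "sym_conn_graph V E"
    and skew: "\<forall>(i, j)\<in>E. \<phi> i j = - \<phi> j i"
    and skew_s: "\<forall>(i, j)\<in>E. \<phi>s i j = - \<phi>s j i"
    and cons: "\<forall>i\<in>V. (\<Sum>j\<in>in_nbrs V E i. \<phi> j i) + q i = 0"
    and cons_s: "\<forall>i\<in>V. (\<Sum>j\<in>in_nbrs V E i. \<phi>s j i) + qs i = 0"
    and T: "T \<subseteq> V" "T \<noteq> {}"
    and dom: "\<forall>i\<in>V - T. q i \<ge> qs i"
  shows "\<forall>u\<in>V - T.
     (\<exists>p. nonint_path E p \<and> hd p \<in> T \<and> last p = u \<and>
          (\<forall>l. Suc l < length p \<longrightarrow> \<phi>s (p ! l) (p ! Suc l) \<ge> \<phi> (p ! l) (p ! Suc l))) \<and>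
     (q u > qs u \<longrightarrow>
       (\<exists>p. nonint_path E p \<and> hd p \<in> T \<and> last p = u \<and>
          (\<forall>l. Suc l < length p \<longrightarrow> \<phi>s (p ! l) (p ! Suc l) > \<phi> (p ! l) (p ! Suc l))))"
proof (intro ballI conjI impI)
  fix u assume u: "u \<in> V - T"
  define d where "d = (\<lambda>i j. \<phi>s i j - \<phi> i j)"
  have "finite V" "sym E"
    using G by (auto simp: sym_conn_graph_def sym_def)
  have d_skew: "skew_on E d"
    unfolding d_def using skew skew_s by (intro skew_on_diff) (auto simp: skew_on_def)
  have d_inflow: "net_inflow V E d i = q i - qs i" if "i \<in> V" for i
  proof -
    have "net_inflow V E \<phi>s i = - qs i" "net_inflow V E \<phi> i = - q i"
      using cons cons_s that by (auto simp: net_inflow_def eq_neg_iff_add_eq_0)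
    then show ?thesis by (simp add: d_def net_inflow_diff)
  qed
  have inflow: "\<forall>i\<in>V - T. net_inflow V E d i \<ge> 0"
    using dom d_inflow by auto
  show "\<exists>p. nonint_path E p \<and> hd p \<in> T \<and> last p = u \<and>
          (\<forall>l. Suc l < length p \<longrightarrow> \<phi>s (p ! l) (p ! Suc l) \<ge> \<phi> (p ! l) (p ! Suc l))"
  proof (rule nonint_path_from_reachable)
    show "u \<in> {(i, j) \<in> E. \<phi> i j \<le> \<phi>s i j}\<^sup>* `` T"
      using reachable_by_nonneg_edges[OF G d_skew T inflow] u by (simp add: d_def)
  qed
  assume "q u > qs u"
  with u d_inflow have "net_inflow V E d u > 0" by simp
  show "\<exists>p. nonint_path E p \<and> hd p \<in> T \<and> last p = u \<and>
          (\<forall>l. Suc l < length p \<longrightarrow> \<phi>s (p ! l) (p ! Suc l) > \<phi> (p ! l) (p ! Suc l))"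
  proof (rule nonint_path_from_reachable)
    show "u \<in> {(i, j) \<in> E. \<phi> i j < \<phi>s i j}\<^sup>* `` T"
      using reachable_by_pos_edges[OF \<open>finite V\<close> \<open>sym E\<close> d_skew inflow] u \<open>net_inflow V E d u > 0\<close>
      by (simp add: d_def)
  qed
qed

end
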